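(* Let $n\ge1$, $\Lambda\ge1$, and let $u\in C(\overline{B_4})$, $B_4\subset\mathbb{R}^n$ the open ball of radius $4$ centered at $0$, satisfy $u\ge0$ and $M_\Lambda^-(D^2u)\le0$ in $B_4$ in the viscosity sense. Then $$\inf_{B_\rho(x_0)}u\le 2\,\rho^{-n\Lambda}u(0)$$ for all $x_0\in B_1$ and all $0<\rho\le 1$.
   Context: For a symmetric $n\times n$ matrix $N$, $M_\Lambda^-(N) := (\text{sum of positive eigenvalues of }N) + \Lambda\,(\text{sum of negative eigenvalues of }N)$. For a bounded domain $\Omega$ and $u,\varphi\in C(\overline\Omega)$, $\varphi$ is tangent from below to $u$ in $\Omega$ at $x_0\in\Omega$ if $\varphi\le u$ in $\overline\Omega$ and $\varphi(x_0)=u(x_0)$. $M_\Lambda^-(D^2u)\le 0$ in the viscosity sense in $\Omega$ means $M_\Lambda^-(D^2\varphi(x_0))\le 0$ whenever $\varphi\in C^2(\overline\Omega)$ is tangent from below to $u$ in $\Omega$ at $x_0\in\Omega$. $B_r(x)$ denotes the open ball of radius $r$ centered at $x$. *)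

theory Defs
  imports "HOL-Analysis.Analysis"
begin

text \<open>For symmetric matrices (the only case used) the geometric multiplicity
  (dimension of the eigenspace) equals the algebraic multiplicity.\<close>

definition eigvals :: "real^'n^'n \<Rightarrow> real set" where
  "eigvals N = {c. \<exists>v. v \<noteq> 0 \<and> N *v v = c *\<^sub>R v}"

definition eigmult :: "real^'n^'n \<Rightarrow> real \<Rightarrow> nat" where
  "eigmult N c = dim {v. N *v v = c *\<^sub>R v}"

definition M_minus :: "real \<Rightarrow> real^'n^'n \<Rightarrow> real" where
  "M_minus \<Lambda> N =
     (\<Sum>c\<in>eigvals N \<inter> {0<..}. c * real (eigmult N c))
     + \<Lambda> * (\<Sum>c\<in>eigvals N \<inter> {..<0}. c * real (eigmult N c))"

definition C2_closure ::
  "(real^'n) set \<Rightarrow> (real^'n \<Rightarrow> real) \<Rightarrow> (real^'n \<Rightarrow> real^'n) \<Rightarrow> (real^'n \<Rightarrow> real^'n^'n) \<Rightarrow> bool"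
  where
  "C2_closure \<Omega> \<phi> G H \<longleftrightarrow>
     continuous_on (closure \<Omega>) \<phi> \<and> continuous_on (closure \<Omega>) G \<and> continuous_on (closure \<Omega>) H \<and>
     (\<forall>x\<in>\<Omega>. (\<phi> has_derivative (\<lambda>h. G x \<bullet> h)) (at x)) \<and>
     (\<forall>x\<in>\<Omega>. (G has_derivative (\<lambda>h. H x *v h)) (at x))"

definition tangent_below ::
  "(real^'n) set \<Rightarrow> (real^'n \<Rightarrow> real) \<Rightarrow> (real^'n \<Rightarrow> real) \<Rightarrow> real^'n \<Rightarrow> bool" where
  "tangent_below \<Omega> \<phi> u x0 \<longleftrightarrow>
     x0 \<in> \<Omega> \<and> (\<forall>x\<in>closure \<Omega>. \<phi> x \<le> u x) \<and> \<phi> x0 = u x0"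

definition visc_super :: "real \<Rightarrow> (real^'n) set \<Rightarrow> (real^'n \<Rightarrow> real) \<Rightarrow> bool" where
  "visc_super \<Lambda> \<Omega> u \<longleftrightarrow>
     (\<forall>\<phi> G H x0. C2_closure \<Omega> \<phi> G H \<and> tangent_below \<Omega> \<phi> u x0 \<longrightarrow> M_minus \<Lambda> (H x0) \<le> 0)"

end

theory Submission
  imports Defs
begin

text \<open>Suppose \<open>m = inf u\<close> over \<open>B_\<rho>(x0)\<close> is positive. Compare \<open>u\<close> with a radial barrier
  \<open>\<psi>\<close> that behaves like a multiple of \<open>|x - x0|^(-n\<Lambda>) - 3^(-n\<Lambda>)\<close> (regularised as
  \<open>(|x - x0|^(2k) + e)^(-n\<Lambda>/(2k))\<close>) and is normalised by \<open>\<psi> \<le> m\<close>. Its Hessian is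
  \<open>p I + q w w^T\<close> with \<open>w = x - x0\<close>, with one positive eigenvalue and \<open>n - 1\<close> negative
  ones; as the exponent \<open>n\<Lambda>\<close> exceeds \<open>\<Lambda> (n - 1) - 1\<close>, this gives \<open>M_\<Lambda>^-(D^2 \<psi>) > 0\<close>
  outside \<open>B_\<rho>(x0)\<close>, where the regularisation is negligible. Since \<open>\<psi> \<le> u\<close> on \<open>B_\<rho>(x0)\<close> and outside \<open>B_3(x0)\<close>, a positive maximum of
  \<open>\<psi> - u\<close> would be a touching point contradicting the viscosity inequality. Hence
  \<open>\<rho>^(n\<Lambda>) m / 2 \<le> \<psi>(0) \<le> u(0)\<close>.\<close>

definition scalar_plus_rank_one :: "real \<Rightarrow> real \<Rightarrow> real^'n \<Rightarrow> real^'n^'n" where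
  "scalar_plus_rank_one p q w = (\<chi> i j. p * (if i = j then 1 else 0) + q * w$i * w$j)"

lemma scalar_plus_rank_one_mult_vec:
  "scalar_plus_rank_one p q w *v h = p *\<^sub>R h + (q * (w \<bullet> h)) *\<^sub>R w"
proof -
  have "(\<Sum>j\<in>UNIV. (p * (if i = j then 1 else 0) + q * w$i * w$j) * h$j)
      = p * h$i + q * (\<Sum>j\<in>UNIV. w$j * h$j) * w$i" for i
  proof -
    have "(\<Sum>j\<in>UNIV. (p * (if i = j then 1 else 0) + q * w$i * w$j) * h$j)
       = (\<Sum>j\<in>UNIV. (if i = j then p * h$j else 0)) + (\<Sum>j\<in>UNIV. q * w$i * (w$j * h$j))"
      unfolding sum.distrib[symmetric] by (rule sum.cong) (auto simp: distrib_right)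
    also have "\<dots> = p * h$i + q * w$i * (\<Sum>j\<in>UNIV. w$j * h$j)"
      by (simp add: sum_distrib_left)
    finally show ?thesis by simp
  qed
  then show ?thesis
    by (simp add: scalar_plus_rank_one_def matrix_vector_mult_def inner_vec_def vec_eq_iff
        mult.commute)
qed

lemma scalar_plus_rank_one_eigenvector:
  "scalar_plus_rank_one p q w *v w = (p + q * (w \<bullet> w)) *\<^sub>R w"
  by (simp add: scalar_plus_rank_one_mult_vec scaleR_add_left)

lemma eigvals_scalar_plus_rank_one:
  "eigvals (scalar_plus_rank_one p q w) \<subseteq> {p, p + q * (w \<bullet> w)}"
proof
  fix c assume "c \<in> eigvals (scalar_plus_rank_one p q w)"
  then obtain v where "v \<noteq> 0" "scalar_plus_rank_one p q w *v v = c *\<^sub>R v"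
    by (auto simp: eigvals_def)
  then have v: "c *\<^sub>R v = p *\<^sub>R v + (q * (w \<bullet> v)) *\<^sub>R w" "v \<noteq> 0"
    by (simp_all add: scalar_plus_rank_one_mult_vec)
  show "c \<in> {p, p + q * (w \<bullet> w)}"
  proof (cases "w \<bullet> v = 0")
    case True
    then show ?thesis using v by simp
  next
    case False
    have "(c - p) *\<^sub>R v = (q * (w \<bullet> v)) *\<^sub>R w"
      using v(1) by (simp add: scaleR_diff_left)
    then have "(c - p) * (w \<bullet> v) = q * (w \<bullet> v) * (w \<bullet> w)"
      by (metis inner_scaleR_right)
    then show ?thesis using False by (simp add: mult.commute)
  qed
qed

lemma eigmult_scalar_plus_rank_one_le:
  fixes w :: "real^'n"
  assumes "w \<noteq> 0" "q \<noteq> 0"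
  shows "eigmult (scalar_plus_rank_one p q w) p \<le> CARD('n) - 1"
proof -
  have "{v. scalar_plus_rank_one p q w *v v = p *\<^sub>R v} \<subseteq> {v. w \<bullet> v = 0}"
    using assms by (auto simp: scalar_plus_rank_one_mult_vec)
  then have "eigmult (scalar_plus_rank_one p q w) p \<le> dim {v. w \<bullet> v = 0}"
    unfolding eigmult_def by (rule dim_subset)
  also have "\<dots> = CARD('n) - 1"
    using dim_hyperplane[OF assms(1)] by simp
  finally show ?thesis .
qed

lemma M_minus_scalar_plus_rank_one_ge:
  fixes w :: "real^'n"
  assumes p: "p < 0" and a: "0 < p + q * (w \<bullet> w)" and "0 \<le> \<Lambda>"
  shows "(p + q * (w \<bullet> w)) + \<Lambda> * (real CARD('n) - 1) * p
           \<le> M_minus \<Lambda> (scalar_plus_rank_one p q w)"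
proof -
  define H where "H = scalar_plus_rank_one p q w"
  define a where "a = p + q * (w \<bullet> w)"
  have "w \<noteq> 0" "q \<noteq> 0" using p a by auto
  have eig_a: "H *v w = a *\<^sub>R w"
    unfolding H_def a_def by (rule scalar_plus_rank_one_eigenvector)
  have pos: "eigvals H \<inter> {0<..} = {a}"
    using eigvals_scalar_plus_rank_one[of p q w] eig_a \<open>w \<noteq> 0\<close> p a
    by (auto simp: H_def a_def eigvals_def)
  have "eigmult H a \<noteq> 0"
    using eig_a \<open>w \<noteq> 0\<close> dim_eq_0[of "{v. H *v v = a *\<^sub>R v}"] by (auto simp: eigmult_def)
  then have sum_pos: "a \<le> (\<Sum>c\<in>eigvals H \<inter> {0<..}. c * real (eigmult H c))"
    using pos a by (simp add: a_def)
  have neg: "eigvals H \<inter> {..<0} \<subseteq> {p}"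
    using eigvals_scalar_plus_rank_one[of p q w] a by (auto simp: H_def)
  have "real (CARD('n) - 1) = real CARD('n) - 1"
    by (simp add: of_nat_diff Suc_leI)
  then have mult_p: "real (eigmult H p) \<le> real CARD('n) - 1"
    using eigmult_scalar_plus_rank_one_le[OF \<open>w \<noteq> 0\<close> \<open>q \<noteq> 0\<close>, of p]
    unfolding H_def by (metis of_nat_le_iff)
  have sum_neg: "(real CARD('n) - 1) * p \<le> (\<Sum>c\<in>eigvals H \<inter> {..<0}. c * real (eigmult H c))"
  proof (cases "p \<in> eigvals H")
    case True
    then have "eigvals H \<inter> {..<0} = {p}" using neg p by auto
    then show ?thesis using mult_p p by (simp add: mult.commute mult_left_mono_neg)
  next
    case False
    then have "eigvals H \<inter> {..<0} = {}" using neg by auto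
    then show ?thesis using p by (simp add: mult_nonneg_nonpos)
  qed
  show ?thesis
    using add_mono[OF sum_pos mult_left_mono[OF sum_neg \<open>0 \<le> \<Lambda>\<close>]]
    by (simp add: M_minus_def H_def a_def mult.assoc)
qed

lemma has_derivative_radial:
  fixes x0 :: "real^'n"
  assumes "(g has_real_derivative g') (at ((x - x0) \<bullet> (x - x0)))"
  shows "((\<lambda>x. g ((x - x0) \<bullet> (x - x0))) has_derivative (\<lambda>h. 2 * g' * ((x - x0) \<bullet> h))) (at x)"
proof -
  have "((\<lambda>x. x - x0) has_derivative (\<lambda>h. h)) (at x)"
    by (auto intro!: derivative_eq_intros)
  from has_derivative_inner[OF this this]
  have "((\<lambda>x. (x - x0) \<bullet> (x - x0)) has_derivative (\<lambda>h. 2 * ((x - x0) \<bullet> h))) (at x)"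
    by (rule has_derivative_eq_rhs) (auto simp: inner_commute)
  from has_derivative_compose[OF this assms[unfolded has_field_derivative_def]]
  show ?thesis by (simp add: o_def algebra_simps)
qed

lemma C2_closure_radial:
  fixes x0 :: "real^'n" and g g' g'' :: "real \<Rightarrow> real"
  assumes g: "\<And>s. 0 \<le> s \<Longrightarrow> (g has_real_derivative g' s) (at s)"
    and g': "\<And>s. 0 \<le> s \<Longrightarrow> (g' has_real_derivative g'' s) (at s)"
    and g'': "\<And>s. 0 \<le> s \<Longrightarrow> isCont g'' s"
  shows "C2_closure \<Omega> (\<lambda>x. g ((x - x0) \<bullet> (x - x0)))
     (\<lambda>x. (2 * g' ((x - x0) \<bullet> (x - x0))) *\<^sub>R (x - x0))
     (\<lambda>x. scalar_plus_rank_one (2 * g' ((x - x0) \<bullet> (x - x0))) (4 * g'' ((x - x0) \<bullet> (x - x0))) (x - x0))"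
proof -
  let ?s = "\<lambda>x::real^'n. (x - x0) \<bullet> (x - x0)"
  have Dg: "((\<lambda>x. g (?s x)) has_derivative (\<lambda>h. 2 * g' (?s x) * ((x - x0) \<bullet> h))) (at x)" for x
    by (rule has_derivative_radial[OF g]) simp
  have Dg': "((\<lambda>x. g' (?s x)) has_derivative (\<lambda>h. 2 * g'' (?s x) * ((x - x0) \<bullet> h))) (at x)" for x
    by (rule has_derivative_radial[OF g']) simp
  have "isCont (\<lambda>x. g'' (?s x)) x" for x
    by (intro continuous_at_compose[unfolded o_def, OF _ g'']) (auto intro!: continuous_intros)
  then have cont: "continuous_on S (\<lambda>x. g (?s x))" "continuous_on S (\<lambda>x. g' (?s x))"
    "continuous_on S (\<lambda>x. g'' (?s x))" for S
    using has_derivative_continuous[OF Dg] has_derivative_continuous[OF Dg']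
    by (auto intro: continuous_at_imp_continuous_on)
  have DG: "((\<lambda>x. (2 * g' (?s x)) *\<^sub>R (x - x0)) has_derivative
      (\<lambda>h. scalar_plus_rank_one (2 * g' (?s x)) (4 * g'' (?s x)) (x - x0) *v h)) (at x)" for x
    using Dg'[of x]
    by (auto intro!: derivative_eq_intros simp: scalar_plus_rank_one_mult_vec algebra_simps)
  show ?thesis
    unfolding C2_closure_def
  proof (intro conjI ballI)
    show "continuous_on (closure \<Omega>) (\<lambda>x. scalar_plus_rank_one (2 * g' (?s x)) (4 * g'' (?s x)) (x - x0))"
      unfolding scalar_plus_rank_one_def
      by (intro continuous_on_vec_lambda continuous_intros cont)
    show "((\<lambda>x. g (?s x)) has_derivative (\<lambda>h. ((2 * g' (?s x)) *\<^sub>R (x - x0)) \<bullet> h)) (at x)" for x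
      using Dg[of x] by (simp add: mult.assoc)
  qed (use cont DG in \<open>auto intro!: continuous_intros\<close>)
qed

lemma C2_closure_add_const:
  "C2_closure \<Omega> \<phi> G H \<Longrightarrow> C2_closure \<Omega> (\<lambda>x. \<phi> x + c) G H"
  unfolding C2_closure_def by (auto intro: continuous_intros has_derivative_add_const)

text \<open>If \<open>\<psi> - u\<close> had a positive maximum on \<open>closure \<Omega>\<close>, it would be attained at a point of
  \<open>\<Omega> - K\<close>, where the translate of \<open>\<psi>\<close> touching \<open>u\<close> from below violates the viscosity
  inequality.\<close>

lemma visc_super_comparison:
  assumes "bounded \<Omega>" "visc_super \<Lambda> \<Omega> u" "continuous_on (closure \<Omega>) u" "C2_closure \<Omega> \<psi> G H"
    and outside: "\<And>y. y \<in> closure \<Omega> \<Longrightarrow> y \<notin> \<Omega> - K \<Longrightarrow> \<psi> y \<le> u y"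
    and strict: "\<And>y. y \<in> \<Omega> - K \<Longrightarrow> 0 < M_minus \<Lambda> (H y)"
    and y: "y \<in> closure \<Omega>"
  shows "\<psi> y \<le> u y"
proof (rule ccontr)
  assume "\<not> \<psi> y \<le> u y"
  have "continuous_on (closure \<Omega>) (\<lambda>x. \<psi> x - u x)"
    using assms(3,4) by (auto intro: continuous_intros simp: C2_closure_def)
  moreover have "compact (closure \<Omega>)" "closure \<Omega> \<noteq> {}"
    using \<open>bounded \<Omega>\<close> y by (auto simp: compact_closure)
  ultimately obtain z where z: "z \<in> closure \<Omega>"
    and max: "\<forall>x\<in>closure \<Omega>. \<psi> x - u x \<le> \<psi> z - u z"
    using continuous_attains_sup by blast
  have "0 < \<psi> z - u z"
    using max y \<open>\<not> \<psi> y \<le> u y\<close> by fastforce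
  then have "z \<in> \<Omega> - K"
    using outside[OF z] by force
  have "tangent_below \<Omega> (\<lambda>x. \<psi> x + (u z - \<psi> z)) u z"
    unfolding tangent_below_def
  proof (intro conjI ballI)
    show "\<psi> x + (u z - \<psi> z) \<le> u x" if "x \<in> closure \<Omega>" for x
      using max that by fastforce
  qed (use \<open>z \<in> \<Omega> - K\<close> in auto)
  then have "M_minus \<Lambda> (H z) \<le> 0"
    using assms(2)[unfolded visc_super_def] C2_closure_add_const[OF assms(4)] by blast
  then show False
    using strict[OF \<open>z \<in> \<Omega> - K\<close>] by simp
qed

definition barrier :: "nat \<Rightarrow> real \<Rightarrow> real \<Rightarrow> real \<Rightarrow> real" where
  "barrier k e \<gamma> s = (s^k + e) powr (-\<gamma>)"

definition barrier_d1 :: "nat \<Rightarrow> real \<Rightarrow> real \<Rightarrow> real \<Rightarrow> real" where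
  "barrier_d1 k e \<gamma> s = - \<gamma> * real k * s^(k-1) * (s^k + e) powr (-\<gamma>-1)"

definition barrier_d2 :: "nat \<Rightarrow> real \<Rightarrow> real \<Rightarrow> real \<Rightarrow> real" where
  "barrier_d2 k e \<gamma> s = - \<gamma> * real k * s^(k-2) * (s^k + e) powr (-\<gamma>-2)
      * (real (k-1) * (s^k + e) - (\<gamma>+1) * real k * s^k)"

lemma barrier_has_derivative:
  assumes "0 \<le> s" "0 < e"
  shows "(barrier k e \<gamma> has_real_derivative barrier_d1 k e \<gamma> s) (at s)"
proof -
  have "((\<lambda>s. s^k + e) has_real_derivative (real k * s^(k-1))) (at s)"
    by (auto intro!: derivative_eq_intros)
  moreover have "0 < s^k + e"
    using assms by (simp add: add_nonneg_pos)
  ultimately show ?thesis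
    unfolding barrier_def[abs_def] barrier_d1_def
    by (rule DERIV_cong[OF DERIV_fun_powr]) (simp add: algebra_simps)
qed

lemma barrier_d1_has_derivative:
  assumes "0 \<le> s" "0 < e" "2 \<le> k"
  shows "(barrier_d1 k e \<gamma> has_real_derivative barrier_d2 k e \<gamma> s) (at s)"
proof -
  define T where "T = s^k + e"
  define P where "P = T powr (-\<gamma>-2)"
  have "0 < T" unfolding T_def using assms by (simp add: add_nonneg_pos)
  then have TP: "T powr (-\<gamma>-1) = T * P"
    unfolding P_def by (subst powr_mult_base) (auto intro: arg_cong[where f = "(powr) T"])
  obtain j where k: "k = j + 2" using assms(3) by (metis le_add_diff_inverse2)
  have "((\<lambda>s. s^k + e) has_real_derivative (real k * s^(j+1))) (at s)"
    by (rule DERIV_cong[OF DERIV_add[OF DERIV_pow DERIV_const]]) (simp add: k)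
  from DERIV_fun_powr[OF this \<open>0 < T\<close>[unfolded T_def], of "-\<gamma>-1"]
  have "((\<lambda>s. (s^k + e) powr (-\<gamma>-1)) has_real_derivative (-\<gamma>-1) * P * (real k * s^(j+1))) (at s)"
    unfolding P_def T_def by (simp add: algebra_simps)
  from DERIV_cmult[OF DERIV_mult'[OF DERIV_pow[of "j+1" s] this], of "- \<gamma> * real k"]
  have "((\<lambda>s. - \<gamma> * real k * (s^(j+1) * (s^k + e) powr (-\<gamma>-1))) has_real_derivative
      - \<gamma> * real k * (s^(j+1) * ((-\<gamma>-1) * P * (real k * s^(j+1))) + real (j+1) * s^j * (T * P))) (at s)"
    unfolding TP[unfolded T_def] T_def by simp
  moreover have "- \<gamma> * real k * (s^(j+1) * ((-\<gamma>-1) * P * (real k * s^(j+1))) + real (j+1) * s^j * (T * P))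
      = barrier_d2 k e \<gamma> s"
    unfolding barrier_d2_def T_def[symmetric] P_def[symmetric] by (simp add: k algebra_simps)
  ultimately show ?thesis
    unfolding barrier_d1_def[abs_def] by (simp add: k mult.assoc)
qed

lemma isCont_barrier_d2:
  assumes "0 \<le> s" "0 < e"
  shows "isCont (barrier_d2 k e \<gamma>) s"
proof -
  have "0 < s^k + e"
    using assms by (simp add: add_nonneg_pos)
  then show ?thesis
    unfolding barrier_d2_def[abs_def] by (intro continuous_intros) auto
qed

lemma barrier_d1_neg:
  assumes "0 < s" "0 < e" "0 < k" "0 < \<gamma>"
  shows "barrier_d1 k e \<gamma> s < 0"
proof -
  have "0 < s^k + e"
    using assms by (simp add: add_pos_pos)
  then have "0 < \<gamma> * real k * s^(k-1) * (s^k + e) powr (-\<gamma>-1)"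
    using assms by simp
  then show ?thesis
    unfolding barrier_d1_def by simp
qed

lemma barrier_antimono:
  assumes "0 \<le> t" "t \<le> s" "0 < e" "0 \<le> \<gamma>"
  shows "barrier k e \<gamma> s \<le> barrier k e \<gamma> t"
  unfolding barrier_def using assms
  by (intro powr_mono2') (auto simp: power_mono add_nonneg_pos)

lemma barrier_strict_antimono:
  assumes "0 \<le> t" "t < s" "0 < e" "0 < \<gamma>" "0 < k"
  shows "barrier k e \<gamma> s < barrier k e \<gamma> t"
  unfolding barrier_def using assms
  by (intro powr_less_mono2_neg) (auto simp: power_strict_mono add_nonneg_pos)

lemma barrier_zero: "0 < k \<Longrightarrow> barrier k e \<gamma> 0 = e powr (-\<gamma>)"
  by (simp add: barrier_def zero_power)

lemma barrier_le_powr: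
  assumes "0 < s" "0 < e" "0 \<le> \<gamma>"
  shows "barrier k e \<gamma> s \<le> s powr (- (\<gamma> * real k))"
proof -
  have "barrier k e \<gamma> s \<le> (s^k) powr (-\<gamma>)"
    unfolding barrier_def using assms by (intro powr_mono2') auto
  also have "\<dots> = s powr (- (\<gamma> * real k))"
    using assms(1) by (simp add: powr_realpow[symmetric] powr_powr mult.commute)
  finally show ?thesis .
qed

lemma barrier_one_ge:
  assumes "0 < e" "e \<le> 1" "0 \<le> \<gamma>"
  shows "1 - \<gamma> \<le> barrier k e \<gamma> 1"
proof -
  have "1 - \<gamma> * ln (1 + e) \<le> exp (- \<gamma> * ln (1 + e))"
    using exp_ge_add_one_self[of "- \<gamma> * ln (1 + e)"] by simp
  moreover have "\<gamma> * ln (1 + e) \<le> \<gamma>"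
    using ln_add_one_self_le_self[of e] assms by (simp add: mult_left_le)
  ultimately show ?thesis
    unfolding barrier_def powr_def using assms by simp
qed

text \<open>With \<open>s = |x - x0|^2\<close>, the Hessian of \<open>barrier (|x - x0|^2)\<close> has the eigenvalue
  \<open>2 barrier_d1 s < 0\<close> with multiplicity \<open>n - 1\<close> and the eigenvalue
  \<open>2 barrier_d1 s + 4 s barrier_d2 s\<close>; for \<open>\<kappa> = 1 + \<Lambda> (n - 1)\<close> the expression below is
  half of the resulting value of \<open>M_minus \<Lambda>\<close>.\<close>

lemma barrier_pucci_pos:
  assumes "0 < s" "0 < e" "2 \<le> k" "0 < \<gamma>" "\<kappa> \<le> 2 * \<gamma> * real k"
    and "e * (2 * real k - 2 + \<kappa>) < 2 * s^k"
  shows "0 < 2 * s * barrier_d2 k e \<gamma> s + \<kappa> * barrier_d1 k e \<gamma> s"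
proof -
  define T where "T = s^k + e"
  define P where "P = T powr (-\<gamma>-2)"
  have "0 < T" unfolding T_def using assms by (simp add: add_pos_pos)
  then have TP: "T powr (-\<gamma>-1) = T * P"
    unfolding P_def by (subst powr_mult_base) (auto intro: arg_cong[where f = "(powr) T"])
  obtain j where k: "k = j + 2" using assms(3) by (metis le_add_diff_inverse2)
  have "2 * s * barrier_d2 k e \<gamma> s + \<kappa> * barrier_d1 k e \<gamma> s
      = \<gamma> * real k * s^(j+1) * P * (s^k * (2 * \<gamma> * real k + 2 - \<kappa>) - e * (2 * real k - 2 + \<kappa>))"
    unfolding barrier_d1_def barrier_d2_def T_def[symmetric] TP P_def[symmetric]
    by (simp add: k T_def algebra_simps)
  moreover have "0 < \<gamma> * real k * s^(j+1) * P"
    using assms \<open>0 < T\<close> by (simp add: P_def)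
  moreover have "s^k * 2 \<le> s^k * (2 * \<gamma> * real k + 2 - \<kappa>)"
    using assms(1,5) by (intro mult_left_mono) auto
  ultimately show ?thesis
    using assms(6) by simp
qed

lemma barrier_height:
  assumes "0 < e" "e \<le> 1" "0 < \<gamma>" "\<gamma> \<le> 1/15" "1 \<le> 2 * \<gamma> * real k"
    and "0 \<le> c" "c * barrier k e \<gamma> 0 \<le> 6/5"
  shows "c * (barrier k e \<gamma> 0 - barrier k e \<gamma> 9) \<le> 2 * (barrier k e \<gamma> 1 - barrier k e \<gamma> 9)"
proof -
  have "barrier k e \<gamma> 9 \<le> 9 powr (- (\<gamma> * real k))"
    using barrier_le_powr assms by simp
  also have "\<dots> \<le> 9 powr (- (1 / 2))"
    using assms(5) by (intro powr_mono) auto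
  also have "(9::real) powr (- (1 / 2)) = 1/3"
    by (simp add: powr_minus powr_half_sqrt real_sqrt_unique)
  finally have "barrier k e \<gamma> 9 \<le> 1/3" .
  moreover have "1 - \<gamma> \<le> barrier k e \<gamma> 1"
    using barrier_one_ge assms by simp
  moreover have "0 \<le> c * barrier k e \<gamma> 9"
    using assms(6) by (simp add: barrier_def)
  ultimately show ?thesis
    using assms(4,7) by (simp add: algebra_simps)
qed

lemma exp_ge_barrier_weight:
  assumes "1 \<le> \<alpha>" "100 * \<alpha>^2 \<le> real k" "\<kappa> \<le> \<alpha>"
  shows "2 * real k - 2 + \<kappa> < 2 * exp (real k / (5 * \<alpha>))"
proof -
  define x where "x = real k / (5 * \<alpha>)"
  have "\<alpha> \<le> 100 * \<alpha>^2"
    using assms(1) by (simp add: power2_eq_square)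
  then have "\<alpha> \<le> real k" "0 < real k"
    using assms(1,2) by linarith+
  then have "0 < x"
    unfolding x_def using assms(1) by simp
  have "100 * \<alpha>^2 * real k \<le> real k * real k"
    using assms(2) by (intro mult_right_mono) auto
  then have "4 * real k \<le> real k * real k / (25 * \<alpha>^2)"
    using assms(1) by (simp add: pos_le_divide_eq ac_simps)
  also have "\<dots> = x^2"
    unfolding x_def by (simp add: power2_eq_square)
  also have "\<dots> \<le> 2 * exp x"
    using exp_lower_Taylor_quadratic[of x] \<open>0 < x\<close> by simp
  finally show ?thesis
    using \<open>\<alpha> \<le> real k\<close> \<open>0 < real k\<close> assms(3) unfolding x_def by linarith
qed

text \<open>With \<open>\<gamma> = \<alpha> / (2k)\<close> the radial function \<open>barrier (|x - x0|^2)\<close> behaves like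
  \<open>|x - x0|^(-\<alpha>)\<close> away from \<open>x0\<close>. Taking \<open>k\<close> of order \<open>\<alpha>^2\<close> makes \<open>\<gamma>\<close> small, and
  \<open>e = \<rho>^(2k) exp (-k / (5\<alpha>))\<close> gives \<open>\<rho>^\<alpha> barrier 0 = exp (1/10)\<close> while keeping \<open>e\<close>
  negligible against \<open>s^k\<close> for \<open>s \<ge> \<rho>^2\<close>.\<close>

lemma barrier_parameters:
  fixes \<alpha> \<kappa> \<rho> :: real
  assumes "1 \<le> \<alpha>" "\<kappa> \<le> \<alpha>" "0 < \<rho>" "\<rho> \<le> 1"
  obtains k e \<gamma> where "2 \<le> k" "0 < e" "\<gamma> * real k = \<alpha> / 2"
    "\<rho> powr \<alpha> * (barrier k e \<gamma> 0 - barrier k e \<gamma> 9) \<le> 2 * (barrier k e \<gamma> 1 - barrier k e \<gamma> 9)"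
    "\<And>s. \<rho>^2 \<le> s \<Longrightarrow> e * (2 * real k - 2 + \<kappa>) < 2 * s^k"
proof
  define k where "k = nat \<lceil>100 * \<alpha>^2\<rceil> + 2"
  define \<gamma> where "\<gamma> = \<alpha> / (2 * real k)"
  define x where "x = real k / (5 * \<alpha>)"
  define e where "e = (\<rho>^2)^k * exp (- x)"
  have k_ge: "100 * \<alpha>^2 \<le> real k" unfolding k_def by linarith
  have "\<alpha> \<le> 100 * \<alpha>^2" "15 * \<alpha> \<le> 200 * \<alpha>^2"
    using assms(1) by (simp_all add: power2_eq_square)
  then have "\<alpha> \<le> real k" "15 * \<alpha> \<le> 2 * real k"
    using k_ge by linarith+
  have "0 < x" "0 < \<gamma>" "\<gamma> \<le> 1/15"
    using assms(1) \<open>\<alpha> \<le> real k\<close> \<open>15 * \<alpha> \<le> 2 * real k\<close>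
    by (auto simp: x_def \<gamma>_def field_simps)
  show "2 \<le> k" "0 < e"
    using assms(3) by (auto simp: k_def e_def)
  show "\<gamma> * real k = \<alpha> / 2"
    using \<open>\<alpha> \<le> real k\<close> assms(1) by (simp add: \<gamma>_def)
  have "e \<le> 1"
    unfolding e_def using assms(3,4) \<open>0 < x\<close> by (intro mult_le_one) (auto simp: power_le_one)
  have "(\<rho>^2)^k = \<rho> powr real (2 * k)"
    using assms(3) by (metis power_mult powr_realpow)
  then have "((\<rho>^2)^k) powr (-\<gamma>) = \<rho> powr (- \<alpha>)"
    using \<open>\<alpha> \<le> real k\<close> assms(1) by (simp add: powr_powr \<gamma>_def)
  moreover have "(exp (- x)) powr (-\<gamma>) = exp (1/10)"
    using \<open>\<alpha> \<le> real k\<close> assms(1) by (simp add: exp_powr_real x_def \<gamma>_def field_simps)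
  ultimately have "barrier k e \<gamma> 0 = \<rho> powr (- \<alpha>) * exp (1/10)"
    using \<open>\<alpha> \<le> real k\<close> assms(1)
    by (simp add: barrier_zero e_def powr_mult del: exp_divide_power_eq)
  then have "\<rho> powr \<alpha> * barrier k e \<gamma> 0 = exp (1/10)"
    using assms(3) by (simp add: powr_minus)
  then have "\<rho> powr \<alpha> * barrier k e \<gamma> 0 \<le> 6/5"
    using exp_bound_lemma[of "1/10::real"] by simp
  then show "\<rho> powr \<alpha> * (barrier k e \<gamma> 0 - barrier k e \<gamma> 9) \<le> 2 * (barrier k e \<gamma> 1 - barrier k e \<gamma> 9)"
    using barrier_height \<open>0 < e\<close> \<open>e \<le> 1\<close> \<open>0 < \<gamma>\<close> \<open>\<gamma> \<le> 1/15\<close> \<open>\<gamma> * real k = \<alpha> / 2\<close> assms(1)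
    by simp
  have "exp (- x) * (2 * real k - 2 + \<kappa>) < exp (- x) * (2 * exp x)"
    using exp_ge_barrier_weight[OF assms(1) k_ge assms(2)] by (simp add: x_def)
  also have "exp (- x) * (2 * exp x) = 2"
    by (simp add: exp_minus field_simps)
  finally have "(\<rho>^2)^k * (exp (- x) * (2 * real k - 2 + \<kappa>)) < (\<rho>^2)^k * 2"
    using assms(3) by (intro mult_strict_left_mono) auto
  show "e * (2 * real k - 2 + \<kappa>) < 2 * s^k" if "\<rho>^2 \<le> s" for s
  proof -
    have "(\<rho>^2)^k \<le> s^k"
      using that by (intro power_mono) auto
    then show ?thesis
      using \<open>(\<rho>^2)^k * (exp (- x) * (2 * real k - 2 + \<kappa>)) < (\<rho>^2)^k * 2\<close>
      unfolding e_def by (simp add: mult.assoc)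
  qed
qed

lemma M_minus_barrier_hessian_pos:
  fixes w :: "real^'n" and \<Lambda> :: real
  defines "\<kappa> \<equiv> 1 + \<Lambda> * (real CARD('n) - 1)"
  assumes "0 \<le> \<Lambda>" "0 < A" "0 < e" "2 \<le> k" "0 < \<gamma>" "\<kappa> \<le> 2 * \<gamma> * real k" "w \<noteq> 0"
    and "e * (2 * real k - 2 + \<kappa>) < 2 * (w \<bullet> w)^k"
  shows "0 < M_minus \<Lambda>
    (scalar_plus_rank_one (2 * A * barrier_d1 k e \<gamma> (w \<bullet> w)) (4 * A * barrier_d2 k e \<gamma> (w \<bullet> w)) w)"
proof -
  define s where "s = w \<bullet> w"
  define p where "p = 2 * A * barrier_d1 k e \<gamma> s"
  define q where "q = 4 * A * barrier_d2 k e \<gamma> s"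
  have "0 < s" using \<open>w \<noteq> 0\<close> by (simp add: s_def)
  have "p < 0"
    unfolding p_def using barrier_d1_neg[OF \<open>0 < s\<close>] assms by (simp add: mult_pos_neg)
  have "0 < 2 * s * barrier_d2 k e \<gamma> s + \<kappa> * barrier_d1 k e \<gamma> s"
    using barrier_pucci_pos[OF \<open>0 < s\<close>] assms by (simp add: s_def)
  moreover have "p + q * s + \<Lambda> * (real CARD('n) - 1) * p
      = 2 * A * (2 * s * barrier_d2 k e \<gamma> s + \<kappa> * barrier_d1 k e \<gamma> s)"
    by (simp add: p_def q_def \<kappa>_def algebra_simps)
  ultimately have "0 < p + q * s + \<Lambda> * (real CARD('n) - 1) * p"
    using \<open>0 < A\<close> by simp
  moreover have "\<Lambda> * (real CARD('n) - 1) * p \<le> 0"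
    using \<open>p < 0\<close> \<open>0 \<le> \<Lambda>\<close> by (simp add: mult_nonneg_nonpos Suc_le_eq)
  ultimately have "0 < p + q * (w \<bullet> w)"
    unfolding s_def by linarith
  from M_minus_scalar_plus_rank_one_ge[OF \<open>p < 0\<close> this \<open>0 \<le> \<Lambda>\<close>]
  show ?thesis
    using \<open>0 < p + q * s + \<Lambda> * (real CARD('n) - 1) * p\<close> unfolding p_def q_def s_def by linarith
qed

lemma C2_closure_barrier:
  fixes x0 :: "real^'n"
  assumes "0 < e" "2 \<le> k"
  shows "C2_closure \<Omega> (\<lambda>y. A * (barrier k e \<gamma> ((y - x0) \<bullet> (y - x0)) - c))
    (\<lambda>y. (2 * (A * barrier_d1 k e \<gamma> ((y - x0) \<bullet> (y - x0)))) *\<^sub>R (y - x0))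
    (\<lambda>y. scalar_plus_rank_one (2 * (A * barrier_d1 k e \<gamma> ((y - x0) \<bullet> (y - x0))))
      (4 * (A * barrier_d2 k e \<gamma> ((y - x0) \<bullet> (y - x0)))) (y - x0))"
proof (rule C2_closure_radial)
  fix s :: real assume "0 \<le> s"
  show "((\<lambda>s. A * (barrier k e \<gamma> s - c)) has_real_derivative A * barrier_d1 k e \<gamma> s) (at s)"
    using DERIV_cmult[OF DERIV_diff[OF barrier_has_derivative[OF \<open>0 \<le> s\<close> assms(1)] DERIV_const]]
    by simp
  show "((\<lambda>s. A * barrier_d1 k e \<gamma> s) has_real_derivative A * barrier_d2 k e \<gamma> s) (at s)"
    using DERIV_cmult[OF barrier_d1_has_derivative[OF \<open>0 \<le> s\<close> assms]] .
  show "isCont (\<lambda>s. A * barrier_d2 k e \<gamma> s) s"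
    using isCont_barrier_d2[OF \<open>0 \<le> s\<close> assms(1)] by (intro continuous_intros)
qed

lemma barrier_sq_dist_le:
  fixes x0 :: "real^'n"
  assumes "0 \<le> r" "r \<le> dist y x0" "0 < e" "0 \<le> \<gamma>"
  shows "barrier k e \<gamma> ((y - x0) \<bullet> (y - x0)) \<le> barrier k e \<gamma> (r^2)"
proof -
  have "r^2 \<le> (dist y x0)^2"
    using assms(1,2) by (intro power_mono)
  then show ?thesis
    using assms by (intro barrier_antimono) (auto simp: dist_norm power2_norm_eq_inner)
qed

lemma barrier_sq_dist_ge:
  fixes x0 :: "real^'n"
  assumes "dist y x0 \<le> r" "0 < e" "0 \<le> \<gamma>"
  shows "barrier k e \<gamma> (r^2) \<le> barrier k e \<gamma> ((y - x0) \<bullet> (y - x0))"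
proof -
  have "(dist y x0)^2 \<le> r^2"
    using assms(1) by (intro power_mono) auto
  then show ?thesis
    using assms by (intro barrier_antimono) (auto simp: dist_norm power2_norm_eq_inner)
qed

lemma radial_barrier:
  fixes x0 :: "real^'n"
  assumes "1 \<le> \<Lambda>" "0 < \<rho>" "\<rho> \<le> 1" "0 < m"
  obtains \<psi> G H where "C2_closure \<Omega> \<psi> G H" "\<And>y. \<psi> y \<le> m"
    "\<And>y. 3 \<le> dist y x0 \<Longrightarrow> \<psi> y \<le> 0"
    "\<And>y. dist y x0 \<le> 1 \<Longrightarrow> \<rho> powr (real CARD('n) * \<Lambda>) * m \<le> 2 * \<psi> y"
    "\<And>y. \<rho> \<le> dist y x0 \<Longrightarrow> 0 < M_minus \<Lambda> (H y)"
proof -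
  define \<alpha> where "\<alpha> = real CARD('n) * \<Lambda>"
  define \<kappa> where "\<kappa> = 1 + \<Lambda> * (real CARD('n) - 1)"
  have "1 \<le> real CARD('n)"
    by (simp add: Suc_le_eq)
  then have "1 \<le> \<alpha>"
    using mult_mono[OF _ assms(1)] by (simp add: \<alpha>_def)
  have "\<kappa> \<le> \<alpha>"
    using assms(1) by (simp add: \<alpha>_def \<kappa>_def algebra_simps)
  obtain k e \<gamma> where k: "2 \<le> k" and e: "0 < e" and \<gamma>: "\<gamma> * real k = \<alpha> / 2"
    and height: "\<rho> powr \<alpha> * (barrier k e \<gamma> 0 - barrier k e \<gamma> 9) \<le> 2 * (barrier k e \<gamma> 1 - barrier k e \<gamma> 9)"
    and small_e: "\<And>s. \<rho>^2 \<le> s \<Longrightarrow> e * (2 * real k - 2 + \<kappa>) < 2 * s^k"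
    using barrier_parameters[OF \<open>1 \<le> \<alpha>\<close> \<open>\<kappa> \<le> \<alpha>\<close> assms(2,3)] by metis
  have "0 < \<gamma> * real k"
    using \<gamma> \<open>1 \<le> \<alpha>\<close> by simp
  then have "0 < \<gamma>"
    by (simp add: zero_less_mult_iff)
  define g where "g = barrier k e \<gamma>"
  define A where "A = m / (g 0 - g 9)"
  have "g 9 < g 0"
    unfolding g_def using barrier_strict_antimono e \<open>0 < \<gamma>\<close> k by simp
  then have "0 < A" "A * (g 0 - g 9) = m"
    using assms(4) by (simp_all add: A_def)
  define \<psi> where "\<psi> y = A * (g ((y - x0) \<bullet> (y - x0)) - g 9)" for y
  show thesis
  proof
    show "C2_closure \<Omega> \<psi>
      (\<lambda>y. (2 * (A * barrier_d1 k e \<gamma> ((y - x0) \<bullet> (y - x0)))) *\<^sub>R (y - x0))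
      (\<lambda>y. scalar_plus_rank_one (2 * (A * barrier_d1 k e \<gamma> ((y - x0) \<bullet> (y - x0))))
        (4 * (A * barrier_d2 k e \<gamma> ((y - x0) \<bullet> (y - x0)))) (y - x0))"
      unfolding \<psi>_def g_def using C2_closure_barrier[OF e k] .
    show "\<psi> y \<le> m" for y
      using barrier_sq_dist_le[of 0 y x0 e \<gamma> k] e \<open>0 < \<gamma>\<close> \<open>0 < A\<close> \<open>A * (g 0 - g 9) = m\<close>
      by (auto simp: \<psi>_def g_def intro!: mult_left_mono)
    show "\<psi> y \<le> 0" if "3 \<le> dist y x0" for y
      using barrier_sq_dist_le[OF _ that e, of \<gamma> k] \<open>0 < \<gamma>\<close> \<open>0 < A\<close>
      by (simp add: \<psi>_def g_def mult_nonneg_nonpos)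
    show "\<rho> powr (real CARD('n) * \<Lambda>) * m \<le> 2 * \<psi> y" if "dist y x0 \<le> 1" for y
    proof -
      have "g 1 \<le> g ((y - x0) \<bullet> (y - x0))"
        using barrier_sq_dist_ge[OF that e, of \<gamma> k] \<open>0 < \<gamma>\<close> by (simp add: g_def)
      then have "A * (\<rho> powr \<alpha> * (g 0 - g 9)) \<le> A * (2 * (g ((y - x0) \<bullet> (y - x0)) - g 9))"
        using height \<open>0 < A\<close> unfolding g_def by (intro mult_left_mono) auto
      then show ?thesis
        unfolding \<psi>_def \<alpha>_def[symmetric] \<open>A * (g 0 - g 9) = m\<close>[symmetric] by (simp add: algebra_simps)
    qed
    show "0 < M_minus \<Lambda> (scalar_plus_rank_one (2 * (A * barrier_d1 k e \<gamma> ((y - x0) \<bullet> (y - x0))))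
        (4 * (A * barrier_d2 k e \<gamma> ((y - x0) \<bullet> (y - x0)))) (y - x0))"
      if "\<rho> \<le> dist y x0" for y
    proof -
      have "\<rho>^2 \<le> (y - x0) \<bullet> (y - x0)"
        using that assms(2) power_mono[of \<rho> "dist y x0" 2] by (simp add: dist_norm power2_norm_eq_inner)
      moreover have "y - x0 \<noteq> 0"
        using that assms(2) by auto
      ultimately show ?thesis
        using M_minus_barrier_hessian_pos[of \<Lambda> A e k \<gamma> "y - x0"] small_e assms(1) \<open>0 < A\<close> e k
          \<open>0 < \<gamma>\<close> \<gamma> \<open>\<kappa> \<le> \<alpha>\<close> by (simp add: \<kappa>_def mult.assoc)
    qed
  qed
qed

lemma visc_super_ge_radial_barrier:
  fixes u :: "real^'n \<Rightarrow> real" and x0 :: "real^'n"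
  assumes "1 \<le> \<Lambda>" "continuous_on (cball 0 4) u" "\<forall>x\<in>ball 0 4. 0 \<le> u x"
    and "visc_super \<Lambda> (ball 0 4) u"
    and "x0 \<in> ball 0 1" "0 < \<rho>" "\<rho> \<le> 1" "\<And>y. y \<in> ball x0 \<rho> \<Longrightarrow> m \<le> u y"
  shows "\<rho> powr (real CARD('n) * \<Lambda>) * m \<le> 2 * u 0"
proof (cases "0 < m")
  case False
  then have "\<rho> powr (real CARD('n) * \<Lambda>) * m \<le> 0"
    by (simp add: mult_nonneg_nonpos)
  moreover have "0 \<le> u 0"
    using assms(3) by simp
  ultimately show ?thesis
    by linarith
next
  case True
  obtain \<psi> G H where C2: "C2_closure (ball 0 4) \<psi> G H" and below_m: "\<And>y. \<psi> y \<le> m"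
    and far: "\<And>y. 3 \<le> dist y x0 \<Longrightarrow> \<psi> y \<le> 0"
    and near: "\<And>y. dist y x0 \<le> 1 \<Longrightarrow> \<rho> powr (real CARD('n) * \<Lambda>) * m \<le> 2 * \<psi> y"
    and strict: "\<And>y. \<rho> \<le> dist y x0 \<Longrightarrow> 0 < M_minus \<Lambda> (H y)"
    using radial_barrier[OF assms(1,6,7) True] by metis
  have "norm x0 < 1"
    using assms(5) by simp
  have u_nonneg: "0 \<le> u y" if "y \<in> cball 0 4" for y
    using continuous_ge_on_closure[of "ball (0::real^'n) 4" u y 0] assms(2,3) that by auto
  define K where "K = {y. dist y x0 < \<rho> \<or> 3 \<le> dist y x0}"
  have "\<psi> 0 \<le> u 0"
  proof (rule visc_super_comparison[where K = K])
    show "\<psi> y \<le> u y" if "y \<in> closure (ball 0 4)" "y \<notin> ball 0 4 - K" for y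
    proof -
      have "y \<in> K"
        using that \<open>norm x0 < 1\<close> norm_triangle_ineq2[of y x0] by (auto simp: K_def dist_norm)
      then show ?thesis
        using below_m[of y] assms(8)[of y] far[of y] u_nonneg[of y] that(1)
        by (auto simp: K_def dist_commute)
    qed
  qed (use assms(2,4) C2 strict in \<open>auto simp: K_def\<close>)
  then show ?thesis
    using near[of 0] \<open>norm x0 < 1\<close> by (simp add: dist_norm)
qed

theorem lemma6p1:
  fixes u :: "real^'n \<Rightarrow> real" and \<Lambda> :: real
  assumes "\<Lambda> \<ge> 1"
    and "continuous_on (cball 0 4) u"
    and "\<forall>x\<in>ball 0 4. u x \<ge> 0"
    and "visc_super \<Lambda> (ball 0 4) u"
  shows "\<forall>x0\<in>ball 0 1. \<forall>\<rho>. 0 < \<rho> \<and> \<rho> \<le> 1 \<longrightarrow>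
           Inf (u ` ball x0 \<rho>) \<le> 2 * \<rho> powr (- (real CARD('n) * \<Lambda>)) * u 0"
proof (intro ballI allI impI)
  fix x0 :: "real^'n" and \<rho> :: real
  assume x0: "x0 \<in> ball 0 1" and \<rho>: "0 < \<rho> \<and> \<rho> \<le> 1"
  have "ball x0 \<rho> \<subseteq> ball 0 4"
    using x0 \<rho> by (subst ball_subset_ball_iff) (auto simp: dist_norm)
  then have "Inf (u ` ball x0 \<rho>) \<le> u y" if "y \<in> ball x0 \<rho>" for y
    using assms(3) that by (intro cInf_lower bdd_belowI[of _ 0]) auto
  from visc_super_ge_radial_barrier[OF assms x0 _ _ this] \<rho>
  have "\<rho> powr (real CARD('n) * \<Lambda>) * Inf (u ` ball x0 \<rho>) \<le> 2 * u 0"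
    by blast
  then show "Inf (u ` ball x0 \<rho>) \<le> 2 * \<rho> powr (- (real CARD('n) * \<Lambda>)) * u 0"
    using \<rho> by (simp add: powr_minus field_simps)
qed

end
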